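(* Let $v_1,\ldots,v_r\in\mathbb{Z}^n$ with $\sum_i v_i=0$ and $\mathbf{a}\in\mathbb{Z}^r$ be such that $P=\bigcap_i\{x:\langle v_i,x\rangle+a_i\ge 0\}$ is compact and each hyperplane $\{\langle v_i,x\rangle+a_i=0\}$ meets $P$. Then for every $x\in L$, \[ \lim_{k\to\infty}\frac{\phi_{k\mathbf{a}}(km_{\mathbf{a}})}{\phi_{k\mathbf{a}}(km_{\mathbf{a}}+\sqrt{k}x)}=e^{-\frac12\sum_{i\in I_{\mathbf{a}}}\frac{\langle v_i,x\rangle^2}{\langle v_i,m_{\mathbf{a}}\rangle+a_i}}. \] Moreover, for every $0<c<\frac16$ there are constants $C>0$ and $K$ such that for all integers $k\ge K$ and all $x\in L$ with $|x|<k^c$, \[ \left|\frac{\phi_{k\mathbf{a}}(km_{\mathbf{a}})}{\phi_{k\mathbf{a}}(km_{\mathbf{a}}+\sqrt{k}x)}\sqrt{\prod_{i\in I_{\mathbf{a}}}\frac{\langle v_i,km_{\mathbf{a}}\rangle+ka_i}{\langle v_i,km_{\mathbf{a}}+\sqrt{k}x\rangle+ka_i}}-e^{-\frac12\sum_{i\in I_{\mathbf{a}}}\frac{\langle v_i,x\rangle^2}{\langle v_i,m_{\mathbf{a}}\rangle+a_i}}\right|\le C\,e^{-\frac12\sum_{i\in I_{\mathbf{a}}}\frac{\langle v_i,x\rangle^2}{\langle v_i,m_{\mathbf{a}}\rangle+a_i}}\,k^{3c-\frac12}. \]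
   Context: $L$ is the linear subspace of $\mathbb{R}^n$ spanned by all differences of points of $P$. $I_{\mathbf{a}}$ is the set of indices $i$ such that $\langle v_i,\cdot\rangle$ is not constant on $P$. For an integer $k\ge1$, $\phi_{k\mathbf{a}}$ is defined on $kP$ by $\phi_{k\mathbf{a}}(y)=\prod_{i=1}^r(\langle v_i,y\rangle+ka_i)^{\langle v_i,y\rangle+ka_i}$ with $0^0=1$; $\phi_{\mathbf{a}}$ is the case $k=1$. $m_{\mathbf{a}}$ is the unique minimizer of $\phi_{\mathbf{a}}$ on $P$; it lies in the relative interior of $P$, so $\langle v_i,m_{\mathbf{a}}\rangle+a_i>0$ for $i\in I_{\mathbf{a}}$, and for fixed $x\in L$ the point $km_{\mathbf{a}}+\sqrt{k}x$ lies in $kP$ for all sufficiently large $k$. *)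

theory Defs
  imports "HOL-Analysis.Analysis"
begin

text \<open>Data: vectors v 0, ..., v (r-1) in Z^n (as real^'n with integer entries),
  and a :: nat => int giving a_0, ..., a_(r-1).\<close>

definition polP :: "(nat \<Rightarrow> real^'n) \<Rightarrow> (nat \<Rightarrow> int) \<Rightarrow> nat \<Rightarrow> (real^'n) set" where
  "polP v a r = {x. \<forall>i<r. v i \<bullet> x + of_int (a i) \<ge> 0}"

definition linL :: "(nat \<Rightarrow> real^'n) \<Rightarrow> (nat \<Rightarrow> int) \<Rightarrow> nat \<Rightarrow> (real^'n) set" where
  "linL v a r = span {x - y | x y. x \<in> polP v a r \<and> y \<in> polP v a r}"

definition Ia :: "(nat \<Rightarrow> real^'n) \<Rightarrow> (nat \<Rightarrow> int) \<Rightarrow> nat \<Rightarrow> nat set" where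
  "Ia v a r = {i. i < r \<and> \<not> (\<exists>c. \<forall>x\<in>polP v a r. v i \<bullet> x = c)}"

definition selfpow :: "real \<Rightarrow> real" where
  "selfpow t = (if t = 0 then 1 else t powr t)"

definition phiK :: "(nat \<Rightarrow> real^'n) \<Rightarrow> (nat \<Rightarrow> int) \<Rightarrow> nat \<Rightarrow> nat \<Rightarrow> real^'n \<Rightarrow> real" where
  "phiK v a r k y = (\<Prod>i<r. selfpow (v i \<bullet> y + real k * of_int (a i)))"

definition ma :: "(nat \<Rightarrow> real^'n) \<Rightarrow> (nat \<Rightarrow> int) \<Rightarrow> nat \<Rightarrow> real^'n" where
  "ma v a r = (THE m. m \<in> polP v a r \<and> (\<forall>y\<in>polP v a r. phiK v a r 1 m \<le> phiK v a r 1 y))"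

definition gaussE :: "(nat \<Rightarrow> real^'n) \<Rightarrow> (nat \<Rightarrow> int) \<Rightarrow> nat \<Rightarrow> real^'n \<Rightarrow> real" where
  "gaussE v a r x = exp (- (1/2) * (\<Sum>i\<in>Ia v a r. (v i \<bullet> x)^2 / (v i \<bullet> ma v a r + of_int (a i))))"

end

theory Submission
  imports Defs
begin

text \<open>
  Write l_i(y) = <v_i, y> + a_i. Then log phi_a = sum_i l_i ln l_i is strictly convex along every
  direction in which some l_i varies, and the compact polytope P contains no line, so m_a is well
  defined. Since t ln t has slope minus infinity at 0, the minimiser satisfies l_i(m_a) > 0 for all
  i in I_a, and the first-order condition reads sum_{i in I_a} <v_i, x> ln l_i(m_a) = 0 for x in L.
  Expanding (w + h) ln (w + h) to second order at w = k l_i(m_a), h = sqrt k <v_i, x>, the terms linear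
  in h cancel by this condition together with sum_i v_i = 0, the quadratic terms give the Gaussian
  exponent, and the cubic remainder is O(|x|^3 / sqrt k); the square-root correction factor is
  exp O(|x| / sqrt k). For |x| < k^c both errors are O(k^(3c - 1/2)).
\<close>

section \<open>The function t ln t and elementary estimates\<close>

lemma xlnx_gt_tangent:
  fixes w z :: real
  assumes "w > 0" "z \<ge> 0" "z \<noteq> w"
  shows "z * ln z > w * ln w + (ln w + 1) * (z - w)"
proof (cases "z = 0")
  case True
  with assms show ?thesis by (simp add: algebra_simps)
next
  case False
  with assms have "z > 0" by simp
  have "ln (w / z) < w / z - 1"
    using ln_le_minus_one[of "w / z"] ln_eq_minus_one[of "w / z"] assms \<open>z > 0\<close>
    by (fastforce simp: field_simps)
  then have "z * (ln w - ln z) < z * (w / z - 1)"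
    using assms \<open>z > 0\<close> by (simp add: ln_div)
  with \<open>z > 0\<close> show ?thesis by (simp add: algebra_simps)
qed

lemma xlnx_ge_tangent:
  fixes w z :: real
  assumes "w > 0" "z \<ge> 0"
  shows "z * ln z \<ge> w * ln w + (ln w + 1) * (z - w)"
  using xlnx_gt_tangent[OF assms] by (cases "z = w") auto

lemma xlnx_convex:
  fixes s p q :: real
  assumes "0 \<le> s" "s \<le> 1" "p \<ge> 0" "q \<ge> 0"
  shows "((1 - s) * p + s * q) * ln ((1 - s) * p + s * q) \<le> (1 - s) * (p * ln p) + s * (q * ln q)"
proof (cases "(1 - s) * p + s * q = 0")
  case True
  with assms have "(1 - s) * p = 0" "s * q = 0"
    by (smt (verit) mult_nonneg_nonneg)+
  then have "(1 - s) * (p * ln p) = 0" "s * (q * ln q) = 0"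
    by (metis mult.assoc mult_zero_left)+
  with True show ?thesis
    by (metis add_0 mult_zero_left order_refl)
next
  case False
  define w where "w = (1 - s) * p + s * q"
  with False assms have "w > 0" by (smt (verit) mult_nonneg_nonneg)
  have "(1 - s) * (p - w) + s * (q - w) = 0"
    by (simp add: w_def algebra_simps)
  then have "w * ln w = w * ln w + (ln w + 1) * ((1 - s) * (p - w) + s * (q - w))"
    by simp
  also have "\<dots> = (1 - s) * (w * ln w + (ln w + 1) * (p - w)) + s * (w * ln w + (ln w + 1) * (q - w))"
    by (simp add: algebra_simps)
  also have "\<dots> \<le> (1 - s) * (p * ln p) + s * (q * ln q)"
    using assms xlnx_ge_tangent[OF \<open>w > 0\<close>]
    by (intro add_mono mult_left_mono) auto
  finally show ?thesis unfolding w_def .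
qed

lemma xlnx_midpoint_less:
  fixes p q :: real
  assumes "p \<ge> 0" "q \<ge> 0" "p \<noteq> q"
  shows "((p + q) / 2) * ln ((p + q) / 2) < (p * ln p + q * ln q) / 2"
proof -
  define w where "w = (p + q) / 2"
  with assms have "w > 0" "p \<noteq> w" "(p - w) + (q - w) = 0" by auto
  have "2 * (w * ln w) = 2 * (w * ln w) + (ln w + 1) * ((p - w) + (q - w))"
    using \<open>(p - w) + (q - w) = 0\<close> by simp
  also have "\<dots> = (w * ln w + (ln w + 1) * (p - w)) + (w * ln w + (ln w + 1) * (q - w))"
    by (simp add: algebra_simps)
  also have "\<dots> < p * ln p + q * ln q"
    using xlnx_gt_tangent[OF \<open>w > 0\<close> _ \<open>p \<noteq> w\<close>] xlnx_ge_tangent[OF \<open>w > 0\<close>] assms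
    by (intro add_less_le_mono) auto
  finally show ?thesis
    unfolding w_def by simp
qed

lemma continuous_on_xlnx: "continuous_on {0..} (\<lambda>x::real. x * ln x)"
proof -
  have "((\<lambda>x::real. x * ln x) \<longlongrightarrow> 0) (at_right 0)"
    by real_asymp
  then have "continuous (at 0 within {0..}) (\<lambda>x::real. x * ln x)"
    by (simp add: continuous_within at_within_Ici_at_right)
  moreover have "isCont (\<lambda>x::real. x * ln x) x" if "x > 0" for x
    using that by (intro continuous_intros) auto
  ultimately show ?thesis
    unfolding continuous_on_eq_continuous_within
    by (metis atLeast_iff continuous_at_imp_continuous_at_within order_le_less)
qed

definition xlnx_taylor_rem :: "real \<Rightarrow> real" where
  "xlnx_taylor_rem u = (1 + u) * ln (1 + u) - u - u\<^sup>2 / 2"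

lemma xlnx_expansion:
  fixes w h :: real
  assumes "w > 0" "w + h > 0"
  shows "(w + h) * ln (w + h) = w * ln w + (ln w + 1) * h + h\<^sup>2 / (2 * w) + w * xlnx_taylor_rem (h / w)"
proof -
  define u where "u = h / w"
  with assms have h: "h = w * u"
    by simp
  then have "w + h = w * (1 + u)"
    by (simp add: algebra_simps)
  with assms have "1 + u > 0"
    by (simp add: zero_less_mult_iff)
  with \<open>w + h = w * (1 + u)\<close> have "ln (w + h) = ln w + ln (1 + u)"
    using assms by (simp add: ln_mult)
  with h assms show ?thesis
    unfolding xlnx_taylor_rem_def u_def[symmetric] by (simp add: field_simps power2_eq_square)
qed

lemma xlnx_taylor_rem_cube_monotone:
  fixes x y :: real
  assumes "-1/2 \<le> x" "x \<le> y" "y \<le> 1/2"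
  shows "xlnx_taylor_rem x + x ^ 3 \<le> xlnx_taylor_rem y + y ^ 3"
    and "xlnx_taylor_rem y - y ^ 3 \<le> xlnx_taylor_rem x - x ^ 3"
proof -
  have deriv: "((\<lambda>w. xlnx_taylor_rem w + w ^ 3) has_real_derivative ln (1 + w) - w + 3 * w\<^sup>2) (at w)"
    "((\<lambda>w. xlnx_taylor_rem w - w ^ 3) has_real_derivative ln (1 + w) - w - 3 * w\<^sup>2) (at w)"
    if "w \<in> {x..y}" for w
    using that assms unfolding xlnx_taylor_rem_def
    by (auto intro!: derivative_eq_intros simp: power2_eq_square)
  have sign: "ln (1 + w) - w + 3 * w\<^sup>2 \<ge> 0" "ln (1 + w) - w - 3 * w\<^sup>2 \<le> 0"
    if "w \<in> {x..y}" for w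
  proof -
    have "\<bar>w\<bar> \<le> 1/2"
      using that assms by auto
    then have "\<bar>ln (1 + w) - w\<bar> \<le> 2 * w\<^sup>2"
      by (rule abs_ln_one_plus_x_minus_x_bound)
    with zero_le_power2[of w] show "ln (1 + w) - w + 3 * w\<^sup>2 \<ge> 0" "ln (1 + w) - w - 3 * w\<^sup>2 \<le> 0"
      unfolding abs_le_iff by linarith+
  qed
  show "xlnx_taylor_rem x + x ^ 3 \<le> xlnx_taylor_rem y + y ^ 3"
    by (rule deriv_nonneg_imp_mono[OF deriv(1) sign(1) assms(2)])
  show "xlnx_taylor_rem y - y ^ 3 \<le> xlnx_taylor_rem x - x ^ 3"
    by (rule deriv_nonpos_imp_antimono[OF deriv(2) sign(2) assms(2)])
qed

lemma abs_xlnx_taylor_rem_le: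
  fixes u :: real
  assumes "\<bar>u\<bar> \<le> 1/2"
  shows "\<bar>xlnx_taylor_rem u\<bar> \<le> \<bar>u\<bar> ^ 3"
proof -
  have "xlnx_taylor_rem 0 = 0"
    unfolding xlnx_taylor_rem_def by simp
  show ?thesis
  proof (cases "0 \<le> u")
    case True
    with xlnx_taylor_rem_cube_monotone[of 0 u] assms \<open>xlnx_taylor_rem 0 = 0\<close>
    have "- (u ^ 3) \<le> xlnx_taylor_rem u" "xlnx_taylor_rem u \<le> u ^ 3"
      by auto
    with True show ?thesis
      by (simp add: abs_le_iff)
  next
    case False
    with xlnx_taylor_rem_cube_monotone[of u 0] assms \<open>xlnx_taylor_rem 0 = 0\<close>
    have "xlnx_taylor_rem u \<le> - (u ^ 3)" "u ^ 3 \<le> xlnx_taylor_rem u"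
      by auto
    moreover have "\<bar>u\<bar> ^ 3 = - (u ^ 3)"
      using False by (simp add: power3_eq_cube)
    ultimately show ?thesis
      by (simp add: abs_le_iff)
  qed
qed

lemma abs_ln_one_plus_le:
  fixes u :: real
  assumes "\<bar>u\<bar> \<le> 1/2"
  shows "\<bar>ln (1 + u)\<bar> \<le> 2 * \<bar>u\<bar>"
proof -
  have "\<bar>u\<bar> * \<bar>u\<bar> \<le> \<bar>u\<bar> * (1/2)"
    using assms by (intro mult_left_mono) auto
  then have "u\<^sup>2 \<le> \<bar>u\<bar> / 2"
    by (simp add: power2_eq_square abs_mult_self_eq)
  then show ?thesis
    using abs_ln_one_plus_x_minus_x_bound[OF assms] by linarith
qed

lemma abs_exp_minus_one_le:
  fixes z :: real
  assumes "\<bar>z\<bar> \<le> 1/2"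
  shows "\<bar>exp z - 1\<bar> \<le> 2 * \<bar>z\<bar>"
proof -
  have "exp z \<le> 1 + 2 * \<bar>z\<bar>"
    using exp_bound_lemma[of z] assms by simp
  then show ?thesis
    using exp_ge_add_one_self[of z] abs_ge_minus_self[of z] unfolding abs_le_iff by linarith
qed

lemma scaled_perturbation:
  fixes K l t :: real
  assumes "K > 0" "l > 0" "\<bar>t\<bar> \<le> sqrt K * l / 2"
  defines "u \<equiv> t / (sqrt K * l)"
  shows "\<bar>u\<bar> \<le> 1/2" "K * l + sqrt K * t = K * l * (1 + u)" "K * l + sqrt K * t > 0"
proof -
  have "sqrt K > 0" "sqrt K * sqrt K = K"
    using assms(1) by simp_all
  have "\<bar>u\<bar> = \<bar>t\<bar> / (sqrt K * l)"
    using assms by (simp add: u_def abs_divide abs_mult)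
  also have "\<dots> \<le> 1/2"
    using assms \<open>sqrt K > 0\<close> by (simp add: divide_le_eq)
  finally show "\<bar>u\<bar> \<le> 1/2" .
  show eq: "K * l + sqrt K * t = K * l * (1 + u)"
    using assms \<open>sqrt K > 0\<close> \<open>sqrt K * sqrt K = K\<close> by (simp add: u_def field_simps)
  have "1 + u > 0"
    using \<open>\<bar>u\<bar> \<le> 1/2\<close> by simp
  with assms show "K * l + sqrt K * t > 0"
    unfolding eq by simp
qed

lemma xlnx_scaled_expansion:
  fixes K l t :: real
  assumes "K > 0" "l > 0" "\<bar>t\<bar> \<le> sqrt K * l / 2"
  shows "\<bar>(K * l) * ln (K * l) - (K * l + sqrt K * t) * ln (K * l + sqrt K * t)
          + ((ln K + 1) * sqrt K * t + sqrt K * t * ln l + t\<^sup>2 / l / 2)\<bar>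
         \<le> \<bar>t\<bar> ^ 3 / (l\<^sup>2 * sqrt K)"
proof -
  define q where "q = sqrt K"
  define u where "u = t / (q * l)"
  have "q > 0" "K = q\<^sup>2"
    using assms(1) unfolding q_def by simp_all
  note u = scaled_perturbation[OF assms, folded q_def, folded u_def]
  have "q * t / (K * l) = u"
    using \<open>q > 0\<close> \<open>K = q\<^sup>2\<close> assms(2) by (simp add: u_def power2_eq_square)
  then have "(K * l + q * t) * ln (K * l + q * t)
      = (K * l) * ln (K * l) + (ln (K * l) + 1) * (q * t) + (q * t)\<^sup>2 / (2 * (K * l)) + (K * l) * xlnx_taylor_rem u"
    using xlnx_expansion[of "K * l" "q * t"] assms u(3) by simp
  moreover have "(q * t)\<^sup>2 / (2 * (K * l)) = t\<^sup>2 / l / 2"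
    using \<open>q > 0\<close> \<open>K = q\<^sup>2\<close> by (simp add: power_mult_distrib)
  moreover have "ln (K * l) = ln K + ln l"
    using assms by (simp add: ln_mult)
  ultimately have "(K * l) * ln (K * l) - (K * l + q * t) * ln (K * l + q * t)
          + ((ln K + 1) * q * t + q * t * ln l + t\<^sup>2 / l / 2) = - ((K * l) * xlnx_taylor_rem u)"
    by (simp add: algebra_simps)
  moreover have "\<bar>(K * l) * xlnx_taylor_rem u\<bar> \<le> (K * l) * \<bar>u\<bar> ^ 3"
    using abs_xlnx_taylor_rem_le[OF u(1)] assms by (simp add: abs_mult)
  moreover have "(K * l) * \<bar>u\<bar> ^ 3 = \<bar>t\<bar> ^ 3 / (l\<^sup>2 * q)"
    using \<open>q > 0\<close> \<open>K = q\<^sup>2\<close> assms(2) unfolding u_def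
    by (simp add: abs_divide abs_mult power_divide power_mult_distrib power2_eq_square power3_eq_cube mult_ac)
  ultimately show ?thesis
    unfolding q_def by simp
qed

lemma abs_ln_scaled_ratio_le:
  fixes K l t :: real
  assumes "K > 0" "l > 0" "\<bar>t\<bar> \<le> sqrt K * l / 2"
  shows "\<bar>ln ((K * l) / (K * l + sqrt K * t))\<bar> \<le> 2 * \<bar>t\<bar> / (l * sqrt K)"
proof -
  define u where "u = t / (sqrt K * l)"
  note u = scaled_perturbation[OF assms, folded u_def]
  have "\<bar>ln ((K * l) / (K * l + sqrt K * t))\<bar> = \<bar>ln (1 + u)\<bar>"
    using u assms by (simp add: ln_div ln_mult)
  also have "\<dots> \<le> 2 * \<bar>u\<bar>"
    by (rule abs_ln_one_plus_le[OF u(1)])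
  also have "\<dots> = 2 * \<bar>t\<bar> / (l * sqrt K)"
    using assms unfolding u_def by (simp add: abs_divide abs_mult mult.commute)
  finally show ?thesis .
qed

lemma abs_mult_sub_exp_le:
  fixes R S g \<epsilon> :: real
  assumes "R > 0" "S > 0" "\<bar>ln R - g\<bar> + \<bar>ln S\<bar> \<le> \<epsilon>" "\<epsilon> \<le> 1/2"
  shows "\<bar>R * S - exp g\<bar> \<le> 2 * \<epsilon> * exp g"
proof -
  define e where "e = ln R - g + ln S"
  have "\<bar>e\<bar> \<le> \<epsilon>"
    using assms(3) unfolding e_def by linarith
  have "R * S = exp (ln R + ln S)"
    using assms(1,2) by (simp add: exp_add)
  also have "ln R + ln S = g + e"
    unfolding e_def by simp
  finally have "R * S = exp g * exp e"
    by (simp add: exp_add)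
  then have "R * S - exp g = exp g * (exp e - 1)"
    by (simp add: algebra_simps)
  then have "\<bar>R * S - exp g\<bar> = exp g * \<bar>exp e - 1\<bar>"
    by (simp add: abs_mult)
  also have "\<dots> \<le> exp g * (2 * \<bar>e\<bar>)"
    using abs_exp_minus_one_le[of e] \<open>\<bar>e\<bar> \<le> \<epsilon>\<close> assms(4) by simp
  also have "\<dots> \<le> 2 * \<epsilon> * exp g"
    using \<open>\<bar>e\<bar> \<le> \<epsilon>\<close> by simp
  finally show ?thesis .
qed

lemma sum_abs_inner_pow_le_powr:
  fixes v :: "nat \<Rightarrow> 'a::real_inner" and w :: "nat \<Rightarrow> real" and \<kappa> c :: real
  assumes "\<kappa> \<ge> 1" "c \<ge> 0" "norm x \<le> \<kappa> powr c" "n \<le> 3" "\<And>i. i \<in> S \<Longrightarrow> w i > 0"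
  shows "(\<Sum>i\<in>S. \<bar>v i \<bullet> x\<bar> ^ n / w i) / sqrt \<kappa> \<le> (\<Sum>i\<in>S. norm (v i) ^ n / w i) * \<kappa> powr (3 * c - 1/2)"
proof -
  have term_le: "\<bar>v i \<bullet> x\<bar> ^ n \<le> norm (v i) ^ n * \<kappa> powr (3 * c)" for i
  proof -
    have "\<bar>v i \<bullet> x\<bar> \<le> norm (v i) * \<kappa> powr c"
      using Cauchy_Schwarz_ineq2[of "v i" x] mult_left_mono[OF assms(3) norm_ge_zero[of "v i"]]
      by linarith
    then have "\<bar>v i \<bullet> x\<bar> ^ n \<le> (norm (v i) * \<kappa> powr c) ^ n"
      by (rule power_mono) simp
    also have "\<dots> = norm (v i) ^ n * \<kappa> powr (n * c)"
      using assms(1) by (simp add: power_mult_distrib powr_power)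
    also have "\<dots> \<le> norm (v i) ^ n * \<kappa> powr (3 * c)"
      using assms(1,2,4) by (intro mult_left_mono powr_mono mult_right_mono) auto
    finally show ?thesis .
  qed
  have "(\<Sum>i\<in>S. \<bar>v i \<bullet> x\<bar> ^ n / w i) \<le> (\<Sum>i\<in>S. norm (v i) ^ n / w i * \<kappa> powr (3 * c))"
  proof (rule sum_mono)
    fix i assume "i \<in> S"
    then show "\<bar>v i \<bullet> x\<bar> ^ n / w i \<le> norm (v i) ^ n / w i * \<kappa> powr (3 * c)"
      using divide_right_mono[OF term_le[of i], of "w i"] assms(5)[of i] by simp
  qed
  also have "\<dots> = (\<Sum>i\<in>S. norm (v i) ^ n / w i) * \<kappa> powr (3 * c)"
    by (rule sum_distrib_right[symmetric])
  finally have "(\<Sum>i\<in>S. \<bar>v i \<bullet> x\<bar> ^ n / w i) / sqrt \<kappa> \<le> (\<Sum>i\<in>S. norm (v i) ^ n / w i) * (\<kappa> powr (3 * c) / sqrt \<kappa>)"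
    using assms(1) by (simp add: divide_right_mono)
  moreover have "\<kappa> powr (3 * c) / sqrt \<kappa> = \<kappa> powr (3 * c - 1/2)"
    using assms(1) by (simp add: powr_diff powr_half_sqrt)
  ultimately show ?thesis
    by simp
qed

section \<open>The minimiser of phi_a\<close>

definition log_phi :: "(nat \<Rightarrow> real^'n) \<Rightarrow> (nat \<Rightarrow> int) \<Rightarrow> nat \<Rightarrow> real^'n \<Rightarrow> real" where
  "log_phi v a r y = (\<Sum>i<r. (v i \<bullet> y + of_int (a i)) * ln (v i \<bullet> y + of_int (a i)))"

lemma selfpow_eq_exp: "selfpow t = exp (t * ln t)"
  unfolding selfpow_def powr_def by auto

lemma phiK_eq_exp:
  "phiK v a r k y = exp (\<Sum>i<r. (v i \<bullet> y + real k * of_int (a i)) * ln (v i \<bullet> y + real k * of_int (a i)))"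
  unfolding phiK_def selfpow_eq_exp by (simp add: exp_sum)

lemma phiK_1_eq_exp_log_phi: "phiK v a r 1 y = exp (log_phi v a r y)"
  unfolding phiK_eq_exp log_phi_def by simp

lemma continuous_on_log_phi: "continuous_on (polP v a r) (log_phi v a r)"
  unfolding log_phi_def
proof (intro continuous_on_sum)
  fix i assume "i \<in> {..<r}"
  then have "(\<lambda>y. v i \<bullet> y + of_int (a i)) ` polP v a r \<subseteq> {0..}"
    unfolding polP_def by auto
  then show "continuous_on (polP v a r) (\<lambda>y. (v i \<bullet> y + of_int (a i)) * ln (v i \<bullet> y + of_int (a i)))"
    by (intro continuous_on_compose2[OF continuous_on_xlnx]) (auto intro!: continuous_intros)
qed

lemma convex_polP: "convex (polP v a r)"
  unfolding convex_alt
proof (intro ballI allI impI)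
  fix x y and u :: real
  assume "x \<in> polP v a r" "y \<in> polP v a r" "0 \<le> u \<and> u \<le> 1"
  moreover have "v i \<bullet> ((1 - u) *\<^sub>R x + u *\<^sub>R y) + of_int (a i)
      = (1 - u) * (v i \<bullet> x + of_int (a i)) + u * (v i \<bullet> y + of_int (a i))" for i
    by (simp add: inner_add_right algebra_simps)
  ultimately show "(1 - u) *\<^sub>R x + u *\<^sub>R y \<in> polP v a r"
    unfolding polP_def by auto
qed

lemma bounded_line_imp_zero:
  fixes m d :: "'a::real_normed_vector"
  assumes "bounded S" and line: "\<And>s. m + s *\<^sub>R d \<in> S"
  shows "d = 0"
proof (rule ccontr)
  assume "d \<noteq> 0"
  obtain B where B: "\<And>x. x \<in> S \<Longrightarrow> norm x \<le> B"
    using assms(1) bounded_iff by blast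
  define s where "s = (B + norm m + 1) / norm d"
  have "0 \<le> B"
    using B[OF line[of 0]] norm_ge_zero[of m] by (simp del: norm_ge_zero)
  then have "norm (s *\<^sub>R d) = B + norm m + 1"
    using \<open>d \<noteq> 0\<close> unfolding s_def by simp
  moreover have "norm (s *\<^sub>R d) \<le> norm (m + s *\<^sub>R d) + norm m"
    using norm_triangle_ineq4[of "m + s *\<^sub>R d" m] by simp
  ultimately show False
    using B[OF line[of s]] by linarith
qed

lemma log_phi_midpoint_less:
  assumes "m1 \<in> polP v a r" "m2 \<in> polP v a r"
    and "\<exists>i<r. v i \<bullet> m1 \<noteq> v i \<bullet> m2"
  shows "log_phi v a r ((1/2) *\<^sub>R (m1 + m2)) < (log_phi v a r m1 + log_phi v a r m2) / 2"
proof -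
  define l where "l y i = v i \<bullet> y + of_int (a i)" for y i
  have l_mid: "l ((1/2) *\<^sub>R (m1 + m2)) i = (l m1 i + l m2 i) / 2" for i
    unfolding l_def by (simp add: inner_add_right field_simps)
  have nonneg: "l m1 i \<ge> 0" "l m2 i \<ge> 0" if "i < r" for i
    using assms that unfolding polP_def l_def by auto
  have "(\<Sum>i<r. ((l m1 i + l m2 i) / 2) * ln ((l m1 i + l m2 i) / 2))
      < (\<Sum>i<r. (l m1 i * ln (l m1 i) + l m2 i * ln (l m2 i)) / 2)"
  proof (rule sum_strict_mono_ex1)
    show "\<forall>i\<in>{..<r}. ((l m1 i + l m2 i) / 2) * ln ((l m1 i + l m2 i) / 2)
        \<le> (l m1 i * ln (l m1 i) + l m2 i * ln (l m2 i)) / 2"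
    proof
      fix i assume "i \<in> {..<r}"
      then show "((l m1 i + l m2 i) / 2) * ln ((l m1 i + l m2 i) / 2)
          \<le> (l m1 i * ln (l m1 i) + l m2 i * ln (l m2 i)) / 2"
        using xlnx_midpoint_less[of "l m1 i" "l m2 i"] nonneg[of i]
        by (cases "l m1 i = l m2 i") simp_all
    qed
    obtain i where "i < r" "v i \<bullet> m1 \<noteq> v i \<bullet> m2"
      using assms(3) by blast
    then have "l m1 i \<noteq> l m2 i"
      unfolding l_def by simp
    with \<open>i < r\<close> show "\<exists>i\<in>{..<r}. ((l m1 i + l m2 i) / 2) * ln ((l m1 i + l m2 i) / 2)
        < (l m1 i * ln (l m1 i) + l m2 i * ln (l m2 i)) / 2"
      using xlnx_midpoint_less nonneg by blast
  qed simp
  then show ?thesis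
    unfolding log_phi_def l_def[symmetric] l_mid
    by (simp add: sum_divide_distrib[symmetric] sum.distrib)
qed

lemma log_phi_segment_le:
  assumes "m \<in> polP v a r" "p \<in> polP v a r" "0 < s" "s < 1" "i < r"
    and "v i \<bullet> m + of_int (a i) = 0" "v i \<bullet> p + of_int (a i) > 0"
  shows "log_phi v a r ((1 - s) *\<^sub>R m + s *\<^sub>R p)
    \<le> (1 - s) * log_phi v a r m + s * log_phi v a r p + s * (v i \<bullet> p + of_int (a i)) * ln s"
proof -
  define l where "l y j = v j \<bullet> y + of_int (a j)" for y j
  have nonneg: "l m j \<ge> 0" "l p j \<ge> 0" if "j < r" for j
    using assms(1,2) that unfolding polP_def l_def by auto
  have l_seg: "l ((1 - s) *\<^sub>R m + s *\<^sub>R p) j = (1 - s) * l m j + s * l p j" for j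
    unfolding l_def by (simp add: inner_add_right algebra_simps)
  have term_le: "((1 - s) * l m j + s * l p j) * ln ((1 - s) * l m j + s * l p j)
      \<le> (1 - s) * (l m j * ln (l m j)) + s * (l p j * ln (l p j)) + (if j = i then s * l p i * ln s else 0)"
    if "j < r" for j
  proof (cases "j = i")
    case True
    with assms(3,6,7) have "l m j = 0" "l p j > 0"
      unfolding l_def by simp_all
    with True \<open>0 < s\<close> show ?thesis
      by (simp add: ln_mult algebra_simps)
  next
    case False
    with xlnx_convex[of s "l m j" "l p j"] assms(3,4) nonneg[OF that] show ?thesis
      by simp
  qed
  have "log_phi v a r ((1 - s) *\<^sub>R m + s *\<^sub>R p)
      \<le> (\<Sum>j<r. (1 - s) * (l m j * ln (l m j)) + s * (l p j * ln (l p j)) + (if j = i then s * l p i * ln s else 0))"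
    unfolding log_phi_def l_def[symmetric] l_seg using term_le by (intro sum_mono) auto
  also have "\<dots> = (1 - s) * log_phi v a r m + s * log_phi v a r p + s * l p i * ln s"
    using assms(5) unfolding log_phi_def l_def[symmetric] by (simp add: sum.distrib sum_distrib_left)
  finally show ?thesis
    unfolding l_def .
qed

lemma ma_minimizes:
  assumes "compact (polP v a r)" "polP v a r \<noteq> {}"
  shows "ma v a r \<in> polP v a r" "\<And>y. y \<in> polP v a r \<Longrightarrow> log_phi v a r (ma v a r) \<le> log_phi v a r y"
proof -
  let ?P = "polP v a r" and ?f = "log_phi v a r"
  have unique: "m1 = m2"
    if m1: "m1 \<in> ?P" "\<forall>y\<in>?P. ?f m1 \<le> ?f y" and m2: "m2 \<in> ?P" "\<forall>y\<in>?P. ?f m2 \<le> ?f y" for m1 m2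
  proof (cases "\<exists>i<r. v i \<bullet> m1 \<noteq> v i \<bullet> m2")
    case True
    have "(1/2) *\<^sub>R (m1 + m2) \<in> ?P"
      using convexD[OF convex_polP m1(1) m2(1), of "1/2" "1/2"] by (simp add: scaleR_add_right)
    with m1(2) m2(2) have "?f m1 \<le> ?f ((1/2) *\<^sub>R (m1 + m2))" "?f m2 \<le> ?f ((1/2) *\<^sub>R (m1 + m2))"
      by blast+
    with log_phi_midpoint_less[OF m1(1) m2(1) True] have False
      by argo
    then show ?thesis ..
  next
    case False
    then have "m1 + s *\<^sub>R (m1 - m2) \<in> ?P" for s
      using m1(1) unfolding polP_def by (simp add: inner_add_right inner_diff_right)
    then show ?thesis
      using bounded_line_imp_zero[OF compact_imp_bounded[OF assms(1)]] by force
  qed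
  obtain m0 where "m0 \<in> ?P" "\<forall>y\<in>?P. ?f m0 \<le> ?f y"
    using continuous_attains_inf[OF assms continuous_on_log_phi] by blast
  with unique have "\<exists>!m. m \<in> ?P \<and> (\<forall>y\<in>?P. phiK v a r 1 m \<le> phiK v a r 1 y)"
    unfolding phiK_1_eq_exp_log_phi exp_le_cancel_iff by blast
  then have "ma v a r \<in> ?P \<and> (\<forall>y\<in>?P. ?f (ma v a r) \<le> ?f y)"
    unfolding ma_def phiK_1_eq_exp_log_phi exp_le_cancel_iff by (rule theI')
  then show "ma v a r \<in> ?P" "\<And>y. y \<in> ?P \<Longrightarrow> ?f (ma v a r) \<le> ?f y"
    by blast+
qed

locale balanced_polytope =
  fixes v :: "nat \<Rightarrow> real^'n" and a :: "nat \<Rightarrow> int" and r :: nat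
  assumes sum_v: "(\<Sum>i<r. v i) = 0"
    and compact_P: "compact (polP v a r)"
    and facets_meet: "\<forall>i<r. \<exists>x\<in>polP v a r. v i \<bullet> x + of_int (a i) = 0"
begin

abbreviation "P \<equiv> polP v a r"
abbreviation "m \<equiv> ma v a r"
abbreviation "I \<equiv> Ia v a r"
abbreviation "L \<equiv> linL v a r"
abbreviation "lam i \<equiv> v i \<bullet> m + of_int (a i)"

lemma P_nonempty: "P \<noteq> {}"
  using facets_meet unfolding polP_def by (cases r) auto

lemma m_in_P: "m \<in> P"
  and m_minimizes: "y \<in> P \<Longrightarrow> log_phi v a r m \<le> log_phi v a r y"
  using ma_minimizes[OF compact_P P_nonempty] by auto

lemma lam_nonneg: "i < r \<Longrightarrow> lam i \<ge> 0"
  using m_in_P unfolding polP_def by auto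

lemma Ia_subset: "I \<subseteq> {..<r}"
  unfolding Ia_def by auto

lemma finite_Ia: "finite I"
  using Ia_subset finite_subset by blast

lemma slack_zero_outside_Ia:
  assumes "i < r" "i \<notin> I" "y \<in> P"
  shows "v i \<bullet> y + of_int (a i) = 0"
proof -
  obtain c where "\<forall>x\<in>P. v i \<bullet> x = c"
    using assms unfolding Ia_def by auto
  moreover obtain z where "z \<in> P" "v i \<bullet> z + of_int (a i) = 0"
    using facets_meet assms by blast
  ultimately show ?thesis
    using assms(3) by auto
qed

lemma inner_L_zero_outside_Ia:
  assumes "i < r" "i \<notin> I" "x \<in> L"
  shows "v i \<bullet> x = 0"
proof -
  have "v i \<bullet> (x - y) = 0" if "x \<in> P" "y \<in> P" for x y
    using slack_zero_outside_Ia[OF assms(1,2) that(1)] slack_zero_outside_Ia[OF assms(1,2) that(2)]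
    by (simp add: inner_diff_right)
  then have "{x - y | x y. x \<in> P \<and> y \<in> P} \<subseteq> {x. v i \<bullet> x = 0}"
    by blast
  then have "L \<subseteq> {x. v i \<bullet> x = 0}"
    unfolding linL_def by (rule span_minimal) (rule subspace_hyperplane)
  with assms(3) show ?thesis
    by auto
qed

lemma sum_lessThan_eq_sum_Ia:
  assumes "x \<in> L" "\<And>i. g i 0 0 = 0"
  shows "(\<Sum>i<r. g i (lam i) (v i \<bullet> x)) = (\<Sum>i\<in>I. g i (lam i) (v i \<bullet> x))"
  using Ia_subset slack_zero_outside_Ia[OF _ _ m_in_P] inner_L_zero_outside_Ia assms
  by (intro sum.mono_neutral_right) auto

lemma sum_Ia_inner_L: "x \<in> L \<Longrightarrow> (\<Sum>i\<in>I. v i \<bullet> x) = 0"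
  using sum_lessThan_eq_sum_Ia[where g = "\<lambda>i l t. t"] sum_v
  by (simp add: inner_sum_left[symmetric])

lemma shift_in_P:
  assumes "x \<in> L" "\<And>j. j \<in> I \<Longrightarrow> lam j + s * (v j \<bullet> x) \<ge> 0"
  shows "m + s *\<^sub>R x \<in> P"
proof -
  have "v j \<bullet> (m + s *\<^sub>R x) + of_int (a j) \<ge> 0" if "j < r" for j
  proof -
    have "v j \<bullet> (m + s *\<^sub>R x) + of_int (a j) = lam j + s * (v j \<bullet> x)"
      by (simp add: inner_add_right algebra_simps)
    moreover have "lam j + s * (v j \<bullet> x) \<ge> 0"
    proof (cases "j \<in> I")
      case True
      then show ?thesis
        by (rule assms(2))
    next
      case False
      with that show ?thesis
        using slack_zero_outside_Ia[OF that False m_in_P] inner_L_zero_outside_Ia[OF that False assms(1)]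
        by simp
    qed
    ultimately show ?thesis
      by simp
  qed
  then show ?thesis
    unfolding polP_def by simp
qed

lemma lam_pos:
  assumes "i \<in> I"
  shows "lam i > 0"
proof (rule ccontr)
  assume "\<not> lam i > 0"
  have "i < r"
    using assms Ia_subset by auto
  with \<open>\<not> lam i > 0\<close> lam_nonneg have "lam i = 0"
    by force
  have "\<not> (\<forall>p\<in>P. v i \<bullet> p = - of_int (a i))"
    using assms unfolding Ia_def by blast
  then obtain p where "p \<in> P" "v i \<bullet> p \<noteq> - of_int (a i)"
    by blast
  define mu where "mu = v i \<bullet> p + of_int (a i)"
  with \<open>p \<in> P\<close> \<open>i < r\<close> \<open>v i \<bullet> p \<noteq> - of_int (a i)\<close> have "mu > 0"
    unfolding polP_def by force
  define D where "D = log_phi v a r p - log_phi v a r m"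
  \<comment> \<open>s is chosen so that mu ln s = -(|D| + 1); moving from m towards p by s then lowers log phi\<close>
  define s where "s = exp (- (\<bar>D\<bar> + 1) / mu)"
  have "0 < s" "s < 1" "mu * ln s = - (\<bar>D\<bar> + 1)"
    using \<open>mu > 0\<close> unfolding s_def by (auto simp: divide_neg_pos)
  define y where "y = (1 - s) *\<^sub>R m + s *\<^sub>R p"
  have "y \<in> P"
    unfolding y_def using convexD_alt[OF convex_polP m_in_P \<open>p \<in> P\<close>] \<open>0 < s\<close> \<open>s < 1\<close> by simp
  have "log_phi v a r y \<le> (1 - s) * log_phi v a r m + s * log_phi v a r p + s * mu * ln s"
    unfolding y_def mu_def
    by (rule log_phi_segment_le[OF m_in_P \<open>p \<in> P\<close> \<open>0 < s\<close> \<open>s < 1\<close> \<open>i < r\<close> \<open>lam i = 0\<close>])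
       (use \<open>mu > 0\<close> mu_def in simp)
  also have "\<dots> = log_phi v a r m + s * (D + mu * ln s)"
    unfolding D_def by (simp add: algebra_simps)
  also have "\<dots> < log_phi v a r m"
    using \<open>0 < s\<close> \<open>mu * ln s = - (\<bar>D\<bar> + 1)\<close> by (simp add: mult_pos_neg)
  finally show False
    using m_minimizes[OF \<open>y \<in> P\<close>] by simp
qed

lemma first_order_condition:
  assumes "x \<in> L"
  shows "(\<Sum>i\<in>I. (v i \<bullet> x) * ln (lam i)) = 0"
proof -
  define t where "t j = v j \<bullet> x" for j
  define g where "g s = (\<Sum>j\<in>I. (lam j + s * t j) * ln (lam j + s * t j))" for s
  have g_eq: "log_phi v a r (m + s *\<^sub>R x) = g s" for s
    using sum_lessThan_eq_sum_Ia[OF assms, where g = "\<lambda>j l t. (l + s * t) * ln (l + s * t)"]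
    unfolding log_phi_def g_def t_def by (simp add: inner_add_right algebra_simps)
  have "\<forall>\<^sub>F s in nhds 0. \<forall>j\<in>I. lam j + s * t j > 0"
  proof (rule eventually_ball_finite[OF finite_Ia], rule ballI)
    fix j assume "j \<in> I"
    have "((\<lambda>s. lam j + s * t j) \<longlongrightarrow> lam j + 0 * t j) (nhds 0)"
      by (intro tendsto_intros filterlim_ident)
    with lam_pos[OF \<open>j \<in> I\<close>] show "\<forall>\<^sub>F s in nhds 0. lam j + s * t j > 0"
      by (auto dest: order_tendstoD(1))
  qed
  then obtain d where "d > 0" and d: "\<And>s. dist s 0 < d \<Longrightarrow> \<forall>j\<in>I. lam j + s * t j > 0"
    unfolding eventually_nhds_metric by blast
  have "g 0 \<le> g s" if "\<bar>0 - s\<bar> < d" for s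
  proof -
    have "m + s *\<^sub>R x \<in> P"
      using d[of s] that by (intro shift_in_P[OF assms] less_imp_le) (auto simp: t_def)
    from m_minimizes[OF this] show ?thesis
      unfolding g_eq using g_eq[of 0] by simp
  qed
  moreover have "(g has_real_derivative (\<Sum>j\<in>I. t j * ln (lam j) + t j)) (at 0)"
    unfolding g_def
    by (intro DERIV_sum) (auto intro!: derivative_eq_intros dest!: lam_pos)
  ultimately have "(\<Sum>j\<in>I. t j * ln (lam j) + t j) = 0"
    using DERIV_local_min \<open>d > 0\<close> by blast
  with sum_Ia_inner_L[OF assms] show ?thesis
    unfolding t_def sum.distrib by simp
qed

section \<open>Expansion of phi_ka around k m_a\<close>

abbreviation ratio :: "nat \<Rightarrow> real^'n \<Rightarrow> real" where
  "ratio k x \<equiv> phiK v a r k (real k *\<^sub>R m) / phiK v a r k (real k *\<^sub>R m + sqrt (real k) *\<^sub>R x)"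

abbreviation correction :: "nat \<Rightarrow> real^'n \<Rightarrow> real" where
  "correction k x \<equiv> sqrt (\<Prod>i\<in>I. (v i \<bullet> (real k *\<^sub>R m) + real k * of_int (a i))
                      / (v i \<bullet> (real k *\<^sub>R m + sqrt (real k) *\<^sub>R x) + real k * of_int (a i)))"

abbreviation quad :: "real^'n \<Rightarrow> real" where
  "quad x \<equiv> \<Sum>i\<in>I. (v i \<bullet> x)\<^sup>2 / lam i"

abbreviation in_taylor_range :: "nat \<Rightarrow> real^'n \<Rightarrow> bool" where
  "in_taylor_range k x \<equiv> \<forall>i\<in>I. \<bar>v i \<bullet> x\<bar> \<le> sqrt (real k) * lam i / 2"

lemma slack_scaled: "v i \<bullet> (\<kappa> *\<^sub>R m) + \<kappa> * of_int (a i) = \<kappa> * lam i"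
  and slack_scaled_shift: "v i \<bullet> (\<kappa> *\<^sub>R m + s *\<^sub>R x) + \<kappa> * of_int (a i) = \<kappa> * lam i + s * (v i \<bullet> x)"
  by (simp_all add: inner_add_right algebra_simps)

lemma gaussE_eq: "gaussE v a r x = exp (- quad x / 2)"
  unfolding gaussE_def by simp

lemma ratio_pos: "ratio k x > 0"
  by (simp add: phiK_eq_exp)

lemma ln_ratio_approx:
  assumes "x \<in> L" "k > 0" "in_taylor_range k x"
  shows "\<bar>ln (ratio k x) + quad x / 2\<bar> \<le> (\<Sum>i\<in>I. \<bar>v i \<bullet> x\<bar> ^ 3 / (lam i)\<^sup>2) / sqrt (real k)"
proof -
  define K where "K = real k"
  define F :: "real \<Rightarrow> real" where "F z = z * ln z" for z
  define t where "t i = v i \<bullet> x" for i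
  define quad_part where
    "quad_part i = (ln K + 1) * sqrt K * t i + sqrt K * t i * ln (lam i) + (t i)\<^sup>2 / lam i / 2" for i
  have "K > 0"
    using assms(2) unfolding K_def by simp
  have "ln (ratio k x) = (\<Sum>i<r. F (K * lam i) - F (K * lam i + sqrt K * t i))"
    unfolding phiK_eq_exp slack_scaled slack_scaled_shift K_def[symmetric] F_def t_def
    by (simp add: exp_diff[symmetric] sum_subtractf)
  also have "\<dots> = (\<Sum>i\<in>I. F (K * lam i) - F (K * lam i + sqrt K * t i))"
    using sum_lessThan_eq_sum_Ia[OF assms(1), where g = "\<lambda>i l t. F (K * l) - F (K * l + sqrt K * t)"]
    unfolding t_def F_def by simp
  moreover have "(\<Sum>i\<in>I. quad_part i)
      = (ln K + 1) * sqrt K * (\<Sum>i\<in>I. t i) + sqrt K * (\<Sum>i\<in>I. t i * ln (lam i)) + quad x / 2"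
    unfolding quad_part_def t_def by (simp add: sum.distrib sum_distrib_left sum_divide_distrib mult.assoc)
  then have "(\<Sum>i\<in>I. quad_part i) = quad x / 2"
    using sum_Ia_inner_L[OF assms(1)] first_order_condition[OF assms(1)] unfolding t_def by simp
  ultimately have split: "ln (ratio k x) + quad x / 2
      = (\<Sum>i\<in>I. F (K * lam i) - F (K * lam i + sqrt K * t i) + quad_part i)"
    by (simp add: sum.distrib)
  have "\<bar>\<Sum>i\<in>I. F (K * lam i) - F (K * lam i + sqrt K * t i) + quad_part i\<bar> \<le> (\<Sum>i\<in>I. \<bar>t i\<bar> ^ 3 / ((lam i)\<^sup>2 * sqrt K))"
  proof (rule order_trans[OF sum_abs sum_mono])
    fix i assume "i \<in> I"
    with assms(3) have "\<bar>t i\<bar> \<le> sqrt K * lam i / 2"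
      unfolding t_def K_def by blast
    from xlnx_scaled_expansion[OF \<open>K > 0\<close> lam_pos[OF \<open>i \<in> I\<close>] this]
    show "\<bar>F (K * lam i) - F (K * lam i + sqrt K * t i) + quad_part i\<bar> \<le> \<bar>t i\<bar> ^ 3 / ((lam i)\<^sup>2 * sqrt K)"
      unfolding F_def quad_part_def .
  qed
  also have "\<dots> = (\<Sum>i\<in>I. \<bar>t i\<bar> ^ 3 / (lam i)\<^sup>2) / sqrt K"
    by (simp only: sum_divide_distrib divide_divide_eq_left)
  finally show ?thesis
    unfolding split t_def K_def .
qed

lemma correction_pos_and_ln_bound:
  assumes "k > 0" "in_taylor_range k x"
  shows "correction k x > 0"
    and "\<bar>ln (correction k x)\<bar> \<le> (\<Sum>i\<in>I. \<bar>v i \<bullet> x\<bar> / lam i) / sqrt (real k)"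
proof -
  define K where "K = real k"
  define f where "f i = (K * lam i) / (K * lam i + sqrt K * (v i \<bullet> x))" for i
  have "K > 0"
    using assms(1) unfolding K_def by simp
  have f_pos: "f i > 0" if "i \<in> I" for i
    using scaled_perturbation(3)[OF \<open>K > 0\<close> lam_pos[OF that]] assms(2) that \<open>K > 0\<close> lam_pos[OF that]
    unfolding f_def K_def by simp
  have corr: "correction k x = sqrt (\<Prod>i\<in>I. f i)"
    unfolding slack_scaled slack_scaled_shift f_def K_def ..
  show "correction k x > 0"
    unfolding corr using f_pos by (simp add: prod_pos)
  have "(\<Prod>i\<in>I. f i) > 0"
    using f_pos by (simp add: prod_pos)
  then have "\<bar>ln (correction k x)\<bar> = \<bar>\<Sum>i\<in>I. ln (f i)\<bar> / 2"
    unfolding corr using f_pos finite_Ia by (simp add: ln_sqrt ln_prod[OF finite_Ia] less_imp_neq[symmetric])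
  also have "\<dots> \<le> (\<Sum>i\<in>I. 2 * \<bar>v i \<bullet> x\<bar> / (lam i * sqrt K)) / 2"
    using abs_ln_scaled_ratio_le[OF \<open>K > 0\<close> lam_pos] assms(2)
    unfolding f_def K_def by (intro divide_right_mono order_trans[OF sum_abs sum_mono]) auto
  also have "\<dots> = (\<Sum>i\<in>I. \<bar>v i \<bullet> x\<bar> / lam i) / sqrt (real k)"
    unfolding K_def by (simp add: sum_divide_distrib sum_distrib_left)
  finally show "\<bar>ln (correction k x)\<bar> \<le> (\<Sum>i\<in>I. \<bar>v i \<bullet> x\<bar> / lam i) / sqrt (real k)" .
qed

abbreviation cubic_coeff :: real where
  "cubic_coeff \<equiv> \<Sum>i\<in>I. norm (v i) ^ 3 / (lam i)\<^sup>2"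

abbreviation linear_coeff :: real where
  "linear_coeff \<equiv> \<Sum>i\<in>I. norm (v i) / lam i"

lemma coeffs_nonneg: "cubic_coeff \<ge> 0" "linear_coeff \<ge> 0"
  using lam_pos by (auto intro!: sum_nonneg simp: less_imp_le)

lemma eventually_in_taylor_range:
  assumes "c < 1/2"
  shows "\<forall>\<^sub>F k in sequentially. k > 0 \<and> (\<forall>x. norm x \<le> real k powr c \<longrightarrow> in_taylor_range k x)"
proof -
  have powr_tendsto: "(\<lambda>k::nat. real k powr (c - 1/2)) \<longlonglongrightarrow> 0"
    using assms by (intro tendsto_neg_powr filterlim_real_sequentially) auto
  have "\<forall>\<^sub>F k in sequentially. \<forall>i\<in>I. norm (v i) * real k powr (c - 1/2) < lam i / 2"
    using lam_pos
    by (intro eventually_ball_finite finite_Ia ballI order_tendstoD(2)[OF tendsto_mult_right_zero[OF powr_tendsto]]) auto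
  moreover have "\<forall>\<^sub>F k in sequentially. k > (0::nat)"
    by (rule eventually_gt_at_top)
  ultimately show ?thesis
  proof eventually_elim
    case (elim k)
    have "\<bar>v i \<bullet> x\<bar> \<le> sqrt (real k) * lam i / 2" if "norm x \<le> real k powr c" "i \<in> I" for x i
    proof -
      have "\<bar>v i \<bullet> x\<bar> \<le> norm (v i) * real k powr c"
        using Cauchy_Schwarz_ineq2[of "v i" x] mult_left_mono[OF that(1) norm_ge_zero] by (rule order_trans)
      also have "\<dots> = (norm (v i) * real k powr (c - 1/2)) * sqrt (real k)"
        using elim by (simp add: powr_half_sqrt[symmetric] mult.assoc flip: powr_add)
      also have "\<dots> \<le> (lam i / 2) * sqrt (real k)"
        using elim that(2) by (intro mult_right_mono) auto
      finally show ?thesis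
        by (simp add: mult.commute)
    qed
    with elim show ?case
      by blast
  qed
qed

lemma ratio_tendsto_gaussE:
  assumes "x \<in> L"
  shows "(\<lambda>k. ratio k x) \<longlonglongrightarrow> gaussE v a r x"
proof -
  define C where "C = (\<Sum>i\<in>I. \<bar>v i \<bullet> x\<bar> ^ 3 / (lam i)\<^sup>2)"
  have "filterlim (\<lambda>k::nat. real k powr (1/4)) at_top sequentially"
    by real_asymp
  then have "\<forall>\<^sub>F k in sequentially. norm x \<le> real k powr (1/4)"
    by (simp add: filterlim_at_top)
  moreover have "\<forall>\<^sub>F k in sequentially. k > 0 \<and> (\<forall>x. norm x \<le> real k powr (1/4) \<longrightarrow> in_taylor_range k x)"
    by (rule eventually_in_taylor_range) simp
  ultimately have "\<forall>\<^sub>F k in sequentially. norm (ln (ratio k x) + quad x / 2) \<le> C * (1 / sqrt (real k))"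
    by eventually_elim (use ln_ratio_approx[OF assms] in \<open>simp add: C_def\<close>)
  moreover have "(\<lambda>k::nat. 1 / sqrt (real k)) \<longlonglongrightarrow> 0"
    by real_asymp
  then have "(\<lambda>k. C * (1 / sqrt (real k))) \<longlonglongrightarrow> 0"
    by (rule tendsto_mult_right_zero)
  ultimately have "(\<lambda>k. ln (ratio k x) + quad x / 2) \<longlonglongrightarrow> 0"
    by (rule Lim_null_comparison)
  then have "(\<lambda>k. exp (ln (ratio k x) + quad x / 2 - quad x / 2)) \<longlonglongrightarrow> exp (0 - quad x / 2)"
    by (intro tendsto_intros)
  then show ?thesis
    using ratio_pos by (simp add: gaussE_eq)
qed

lemma ratio_correction_error_le:
  assumes "x \<in> L" "k > 0" "c \<ge> 0" "norm x \<le> real k powr c" "in_taylor_range k x"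
    and small: "(cubic_coeff + linear_coeff) * real k powr (3 * c - 1/2) \<le> 1/2"
  shows "\<bar>ratio k x * correction k x - gaussE v a r x\<bar>
    \<le> 2 * (cubic_coeff + linear_coeff) * gaussE v a r x * real k powr (3 * c - 1/2)"
proof -
  define p where "p = real k powr (3 * c - 1/2)"
  have bound: "(\<Sum>i\<in>I. \<bar>v i \<bullet> x\<bar> ^ n / w i) / sqrt (real k) \<le> (\<Sum>i\<in>I. norm (v i) ^ n / w i) * p"
    if "n \<le> 3" "\<And>i. i \<in> I \<Longrightarrow> w i > 0" for n w
    unfolding p_def by (rule sum_abs_inner_pow_le_powr[OF _ _ _ that]) (use assms(2-4) in auto)
  have "\<bar>ln (ratio k x) + quad x / 2\<bar> \<le> cubic_coeff * p"
    using ln_ratio_approx[OF assms(1,2,5)] bound[of 3 "\<lambda>i. (lam i)\<^sup>2"] lam_pos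
    by (meson order_trans zero_less_power le_refl)
  moreover have "\<bar>ln (correction k x)\<bar> \<le> linear_coeff * p"
    using correction_pos_and_ln_bound(2)[OF assms(2,5)] bound[of 1 lam] lam_pos
    unfolding power_one_right by (meson order_trans le_numeral_extra(1) one_le_numeral)
  ultimately have "\<bar>ln (ratio k x) - - quad x / 2\<bar> + \<bar>ln (correction k x)\<bar> \<le> (cubic_coeff + linear_coeff) * p"
    by (simp add: distrib_right)
  with small have "\<bar>ratio k x * correction k x - exp (- quad x / 2)\<bar>
      \<le> 2 * ((cubic_coeff + linear_coeff) * p) * exp (- quad x / 2)"
    unfolding p_def by (intro abs_mult_sub_exp_le ratio_pos correction_pos_and_ln_bound(1)[OF assms(2,5)])
  then show ?thesis
    unfolding gaussE_eq p_def by (simp add: algebra_simps)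
qed

lemma ratio_correction_error_bound:
  assumes "0 < c" "c < 1/6"
  shows "\<exists>C>0. \<exists>K. \<forall>k\<ge>K. \<forall>x\<in>L. norm x < real k powr c \<longrightarrow>
           \<bar>ratio k x * correction k x - gaussE v a r x\<bar> \<le> C * gaussE v a r x * real k powr (3 * c - 1/2)"
proof -
  define C where "C = 2 * (cubic_coeff + linear_coeff) + 1"
  have "(\<lambda>k::nat. real k powr (3 * c - 1/2)) \<longlonglongrightarrow> 0"
    using assms(2) by (intro tendsto_neg_powr filterlim_real_sequentially) auto
  then have "\<forall>\<^sub>F k in sequentially. (cubic_coeff + linear_coeff) * real k powr (3 * c - 1/2) < 1/2"
    by (rule order_tendstoD(2)[OF tendsto_mult_right_zero]) simp
  moreover have "\<forall>\<^sub>F k in sequentially. k > 0 \<and> (\<forall>x. norm x \<le> real k powr c \<longrightarrow> in_taylor_range k x)"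
    using assms(2) by (intro eventually_in_taylor_range) simp
  ultimately have "\<forall>\<^sub>F k in sequentially. k > 0 \<and> (\<forall>x. norm x \<le> real k powr c \<longrightarrow> in_taylor_range k x)
      \<and> (cubic_coeff + linear_coeff) * real k powr (3 * c - 1/2) < 1/2"
    by eventually_elim blast
  then obtain K where K: "\<And>k. k \<ge> K \<Longrightarrow> k > 0 \<and> (\<forall>x. norm x \<le> real k powr c \<longrightarrow> in_taylor_range k x)
      \<and> (cubic_coeff + linear_coeff) * real k powr (3 * c - 1/2) < 1/2"
    unfolding eventually_sequentially by blast
  have "\<bar>ratio k x * correction k x - gaussE v a r x\<bar> \<le> C * gaussE v a r x * real k powr (3 * c - 1/2)"
    if "k \<ge> K" "x \<in> L" "norm x < real k powr c" for k x
  proof -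
    have "\<bar>ratio k x * correction k x - gaussE v a r x\<bar>
        \<le> 2 * (cubic_coeff + linear_coeff) * gaussE v a r x * real k powr (3 * c - 1/2)"
      using K[OF \<open>k \<ge> K\<close>] that assms(1) by (intro ratio_correction_error_le) auto
    also have "\<dots> \<le> C * gaussE v a r x * real k powr (3 * c - 1/2)"
      unfolding C_def by (intro mult_right_mono) (auto simp: gaussE_def)
    finally show ?thesis .
  qed
  moreover have "C > 0"
    using coeffs_nonneg unfolding C_def by simp
  ultimately show ?thesis
    by blast
qed

end

theorem mainTheorem3:
  fixes v :: "nat \<Rightarrow> real^'n" and a :: "nat \<Rightarrow> int" and r :: nat
  assumes vint: "\<forall>i<r. \<forall>j. v i $ j \<in> \<int>"
    and vsum: "(\<Sum>i<r. v i) = 0"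
    and Pcpt: "compact (polP v a r)"
    and facets: "\<forall>i<r. \<exists>x\<in>polP v a r. v i \<bullet> x + of_int (a i) = 0"
  shows "(\<forall>x\<in>linL v a r.
           ((\<lambda>k::nat. phiK v a r k (real k *\<^sub>R ma v a r)
                      / phiK v a r k (real k *\<^sub>R ma v a r + sqrt (real k) *\<^sub>R x))
             \<longlonglongrightarrow> gaussE v a r x))
       \<and> (\<forall>c::real. 0 < c \<and> c < 1/6 \<longrightarrow>
           (\<exists>C>0. \<exists>K::nat. \<forall>k::nat. k \<ge> K \<longrightarrow>
              (\<forall>x\<in>linL v a r. norm x < real k powr c \<longrightarrow>
                 \<bar>phiK v a r k (real k *\<^sub>R ma v a r)
                    / phiK v a r k (real k *\<^sub>R ma v a r + sqrt (real k) *\<^sub>R x)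
                  * sqrt (\<Prod>i\<in>Ia v a r.
                      (v i \<bullet> (real k *\<^sub>R ma v a r) + real k * of_int (a i))
                      / (v i \<bullet> (real k *\<^sub>R ma v a r + sqrt (real k) *\<^sub>R x) + real k * of_int (a i)))
                  - gaussE v a r x\<bar>
                 \<le> C * gaussE v a r x * real k powr (3 * c - 1/2))))"
proof -
  interpret balanced_polytope v a r
    using vsum Pcpt facets by unfold_locales
  show ?thesis
    using ratio_tendsto_gaussE ratio_correction_error_bound by blast
qed

end
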